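(* Let $n\ge 2$ and let $B$ be an $n\times n$ agreement matrix. If $H(X_B^+)=0$ and $B$ has exactly $m$ non-null rows, then $IA_\epsilon(B)$ exists and equals $(n-m)/n$.
   Context: An $n\times n$ agreement matrix $B$ has nonnegative entries $B[y][x]$ (row $y$, column $x$), not all zero. A row (column) is non-null if not all of its entries are $0$. For any $n\times n$ matrix $M$ with nonnegative real entries not all zero, let $S_M=\sum_{y,x}M[y][x]$ and define random variables $X_M$ on $\{1,\dots,n\}$ with $P(X_M=x)=\sum_yM[y][x]/S_M$, $Y_M$ with $P(Y_M=y)=\sum_xM[y][x]/S_M$, and the joint variable $X_MY_M$ with $P(X_MY_M=(y,x))=M[y][x]/S_M$. $H$ is Shannon entropy in base 2, defined only when all probabilities are positive. The information agreement is $IA(M)=\frac{H(X_M)+H(Y_M)-H(X_MY_M)}{\min\{H(X_M),H(Y_M)\}}$. For $\epsilon>0$, the $0$-freed matrix $B_\epsilon$ is obtained from $B$ by replacing every zero entry by $\epsilon$, and $IA_\epsilon(B)=\lim_{\epsilon\to0^+}IA(B_\epsilon)$. For a random variable $Z$, the refined variable $Z^+$ is $Z$ restricted to values of positive probability, with $H(Z^+)=-\sum_{z:\,p_Z(z)>0}p_Z(z)\log_2p_Z(z)$. *)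

theory Defs
  imports Complex_Main
begin

(* n x n matrices are functions M :: nat => nat => real, M y x = entry in row y, column x,
   with indices ranging over {..<n} (0-based instead of 1-based). *)

definition agreement_matrix :: "nat \<Rightarrow> (nat \<Rightarrow> nat \<Rightarrow> real) \<Rightarrow> bool" where
  "agreement_matrix n B \<longleftrightarrow> (\<forall>y<n. \<forall>x<n. 0 \<le> B y x) \<and> (\<exists>y<n. \<exists>x<n. B y x \<noteq> 0)"

definition non_null_rows :: "nat \<Rightarrow> (nat \<Rightarrow> nat \<Rightarrow> real) \<Rightarrow> nat set" where
  "non_null_rows n B = {y. y < n \<and> (\<exists>x<n. B y x \<noteq> 0)}"

definition Ssum :: "nat \<Rightarrow> (nat \<Rightarrow> nat \<Rightarrow> real) \<Rightarrow> real" where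
  "Ssum n M = (\<Sum>y<n. \<Sum>x<n. M y x)"

definition pX :: "nat \<Rightarrow> (nat \<Rightarrow> nat \<Rightarrow> real) \<Rightarrow> nat \<Rightarrow> real" where
  "pX n M x = (\<Sum>y<n. M y x) / Ssum n M"

definition pY :: "nat \<Rightarrow> (nat \<Rightarrow> nat \<Rightarrow> real) \<Rightarrow> nat \<Rightarrow> real" where
  "pY n M y = (\<Sum>x<n. M y x) / Ssum n M"

definition pXY :: "nat \<Rightarrow> (nat \<Rightarrow> nat \<Rightarrow> real) \<Rightarrow> nat \<times> nat \<Rightarrow> real" where
  "pXY n M yx = M (fst yx) (snd yx) / Ssum n M"

(* Shannon entropy (base 2) of a distribution p on a finite value set A
   (used only when all probabilities are positive) *)
definition shannonH :: "'a set \<Rightarrow> ('a \<Rightarrow> real) \<Rightarrow> real" where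
  "shannonH A p = - (\<Sum>z\<in>A. p z * log 2 (p z))"

(* entropy of the refined variable Z^+: sum over values of positive probability *)
definition shannonH_plus :: "'a set \<Rightarrow> ('a \<Rightarrow> real) \<Rightarrow> real" where
  "shannonH_plus A p = - (\<Sum>z\<in>{z\<in>A. 0 < p z}. p z * log 2 (p z))"

definition IA :: "nat \<Rightarrow> (nat \<Rightarrow> nat \<Rightarrow> real) \<Rightarrow> real" where
  "IA n M = (shannonH {..<n} (pX n M) + shannonH {..<n} (pY n M)
              - shannonH ({..<n} \<times> {..<n}) (pXY n M))
            / min (shannonH {..<n} (pX n M)) (shannonH {..<n} (pY n M))"

definition zero_freed :: "(nat \<Rightarrow> nat \<Rightarrow> real) \<Rightarrow> real \<Rightarrow> nat \<Rightarrow> nat \<Rightarrow> real" where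
  "zero_freed B \<epsilon> = (\<lambda>y x. if B y x = 0 then \<epsilon> else B y x)"

end

theory Submission
  imports Defs
begin

(*
  Freeing the zeros of B turns every weight of X, Y and XY into a + b e, where a is the weight
  under B and b counts the freed zeros it collects. Up to a function that is differentiable at 0,
  the entropy of such weights is H(Z^+) + k (- e log e) / S, where S is the total mass of B and k
  sums b over the weights with a = 0; so H(Z_e) = H(Z^+) + k (- e log e) / S + o(- e log e).
  If H(X^+) = 0, only one column of B is non-null, and then k = n (n - 1) for X, n (n - m) for Y
  and n^2 - m for XY, while H(XY^+) = H(Y^+). The mutual information is therefore
  (n - 1) (n - m) (- e log e) / S + o(- e log e). The minimum of H(X) and H(Y) is asymptotically
  H(X): either H(Y^+) > 0, so H(Y) stays away from 0, or m = 1 and the two coefficients agree.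
*)

section \<open>Entropy of normalised weights\<close>

lemma shannonH_normalize:
  fixes a :: "'a \<Rightarrow> real"
  assumes "finite A" "\<forall>i\<in>A. 0 < a i"
  shows "shannonH A (\<lambda>i. a i / sum a A) = log 2 (sum a A) - (\<Sum>i\<in>A. a i * log 2 (a i)) / sum a A"
proof (cases "A = {}")
  case False
  define T where "T = sum a A"
  have "0 < T" using assms False unfolding T_def by (intro sum_pos) auto
  have "(\<Sum>i\<in>A. a i / T * log 2 (a i / T)) = (\<Sum>i\<in>A. a i * log 2 (a i) / T - log 2 T * (a i / T))"
    using assms \<open>0 < T\<close> by (intro sum.cong) (auto simp: log_divide field_simps)
  also have "\<dots> = (\<Sum>i\<in>A. a i * log 2 (a i)) / T - log 2 T * (sum a A / T)"
    by (simp add: sum_subtractf sum_divide_distrib sum_distrib_left)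
  also have "\<dots> = (\<Sum>i\<in>A. a i * log 2 (a i)) / T - log 2 T"
    using \<open>0 < T\<close> by (simp add: T_def)
  finally show ?thesis unfolding shannonH_def T_def by simp
qed (simp add: shannonH_def log_def)

lemma shannonH_plus_normalize:
  fixes a :: "'a \<Rightarrow> real"
  assumes "finite A" "\<forall>i\<in>A. 0 \<le> a i"
  shows "shannonH_plus A (\<lambda>i. a i / sum a A)
           = log 2 (sum a A) - (\<Sum>i\<in>{i\<in>A. a i \<noteq> 0}. a i * log 2 (a i)) / sum a A"
proof -
  define P where "P = {i\<in>A. a i \<noteq> 0}"
  have "sum a P = sum a A"
    unfolding P_def using assms by (intro sum.mono_neutral_left) auto
  moreover have "{i\<in>A. 0 < a i / sum a A} = P"
    using assms \<open>sum a P = sum a A\<close>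
    by (auto simp: P_def zero_less_divide_iff sum_nonneg order.not_eq_order_implies_strict
        intro!: sum_pos2[of _ _ a])
  ultimately show ?thesis
    using shannonH_normalize[of P a] assms
    by (simp add: shannonH_plus_def shannonH_def P_def order.not_eq_order_implies_strict)
qed

lemma neg_mult_log_nonneg:
  fixes p :: real
  assumes "0 < p" "p \<le> 1"
  shows "0 \<le> - (p * log 2 p)"
  using assms by (simp add: mult_nonneg_nonpos)

lemma shannonH_plus_nonneg:
  fixes p :: "'a \<Rightarrow> real"
  assumes "finite A" "\<forall>z\<in>A. 0 \<le> p z" "sum p A = 1"
  shows "0 \<le> shannonH_plus A p"
proof -
  have "p z \<le> 1" if "z \<in> A" for z
    using assms that member_le_sum[of z A p] by auto
  then show ?thesis
    unfolding shannonH_plus_def sum_negf[symmetric] by (intro sum_nonneg neg_mult_log_nonneg) auto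
qed

lemma shannonH_plus_eq_0_imp_card_support:
  fixes p :: "'a \<Rightarrow> real"
  assumes fin: "finite A" and nonneg: "\<forall>z\<in>A. 0 \<le> p z" and sum1: "sum p A = 1"
    and H0: "shannonH_plus A p = 0"
  shows "card {z\<in>A. 0 < p z} = 1"
proof -
  define P where "P = {z\<in>A. 0 < p z}"
  have le1: "p z \<le> 1" if "z \<in> A" for z
    using assms that member_le_sum[of z A p] by auto
  have "0 \<le> - (p z * log 2 (p z))" if "z \<in> P" for z
    using that le1 by (intro neg_mult_log_nonneg) (auto simp: P_def)
  then have terms_0: "\<forall>z\<in>P. - (p z * log 2 (p z)) = 0"
    using H0 fin unfolding shannonH_plus_def P_def[symmetric] sum_negf[symmetric]
    by (subst sum_nonneg_eq_0_iff[symmetric]) (auto simp: P_def)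
  have P_1: "p z = 1" if "z \<in> P" for z
  proof -
    have "0 < p z" "log 2 (p z) = 0"
      using that terms_0 by (auto simp: P_def)
    then show ?thesis
      using log_le_zero_cancel_iff[of 2 "p z"] zero_le_log_cancel_iff[of 2 "p z"] by linarith
  qed
  have "sum p A = sum p P"
    using fin nonneg by (intro sum.mono_neutral_right) (auto simp: P_def order.not_eq_order_implies_strict)
  also have "\<dots> = real (card P)"
    using P_1 by simp
  finally show ?thesis using sum1 by (simp add: P_def)
qed

section \<open>Asymptotics as the freed weight tends to 0\<close>

lemma neg_mult_log_tendsto_0: "((\<lambda>e::real. - (e * log 2 e)) \<longlongrightarrow> 0) (at_right 0)"
proof -
  have "((\<lambda>x::real. ln x / x / ln 2) \<longlongrightarrow> 0 / ln 2) at_top"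
    by (intro tendsto_divide ln_x_over_x_tendsto_0 tendsto_const) simp
  moreover have "\<forall>\<^sub>F x in at_top. ln x / x / ln 2 = - (inverse x * log 2 (inverse x))"
    using eventually_gt_at_top[of "0::real"]
    by eventually_elim (simp add: log_def ln_inverse divide_inverse)
  ultimately have "((\<lambda>x::real. - (inverse x * log 2 (inverse x))) \<longlongrightarrow> 0) at_top"
    by (simp add: tendsto_cong)
  then show ?thesis
    by (simp only: filterlim_at_right_to_top)
qed

lemma neg_mult_log_pos_at_right_0: "\<forall>\<^sub>F e in at_right 0. 0 < - (e * log 2 (e::real))"
  by (rule eventually_at_rightI[of _ 1]) (auto simp: mult_pos_neg)

lemma one_div_log_tendsto_0: "((\<lambda>e::real. 1 / log 2 e) \<longlongrightarrow> 0) (at_right 0)"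
proof -
  have "LIM e at_right 0. - ln (e::real) :> at_top"
    using ln_at_0 by (simp add: filterlim_uminus_at_bot)
  then have "((\<lambda>e::real. - ln 2 * inverse (- ln e)) \<longlongrightarrow> - ln 2 * 0) (at_right 0)"
    by (intro tendsto_intros tendsto_inverse_0_at_top)
  then show ?thesis
    by (simp add: log_def divide_inverse mult.commute)
qed

lemma DERIV_diff_div_neg_mult_log:
  fixes f :: "real \<Rightarrow> real"
  assumes "(f has_real_derivative D) (at 0)"
  shows "((\<lambda>e. (f e - f 0) / - (e * log 2 e)) \<longlongrightarrow> 0) (at_right 0)"
proof -
  have "((\<lambda>e. (f e - f 0) / e) \<longlongrightarrow> D) (at 0)"
    using assms by (simp add: DERIV_def)
  then have "((\<lambda>e. (f e - f 0) / e) \<longlongrightarrow> D) (at_right 0)"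
    by (rule tendsto_within_subset) auto
  then have "((\<lambda>e. - ((f e - f 0) / e) * (1 / log 2 e)) \<longlongrightarrow> - D * 0) (at_right 0)"
    by (intro tendsto_intros one_div_log_tendsto_0)
  then show ?thesis
    by (simp add: field_simps)
qed

lemma sum_affine_weights_mult_log:
  fixes \<alpha> \<beta> :: "'a \<Rightarrow> real"
  assumes "finite I" "\<forall>i\<in>I. \<alpha> i = 0 \<longrightarrow> 0 < \<beta> i" "0 < e"
  shows "(\<Sum>i\<in>I. (\<alpha> i + \<beta> i * e) * log 2 (\<alpha> i + \<beta> i * e))
           = (\<Sum>i\<in>{i\<in>I. \<alpha> i \<noteq> 0}. (\<alpha> i + \<beta> i * e) * log 2 (\<alpha> i + \<beta> i * e))
             + (\<Sum>i\<in>{i\<in>I. \<alpha> i = 0}. \<beta> i * e * log 2 (\<beta> i))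
             + sum \<beta> {i\<in>I. \<alpha> i = 0} * (e * log 2 e)"
proof -
  have split: "(\<Sum>i\<in>I. f i) = (\<Sum>i\<in>{i\<in>I. \<alpha> i \<noteq> 0}. f i) + (\<Sum>i\<in>{i\<in>I. \<alpha> i = 0}. f i)"
    for f :: "'a \<Rightarrow> real"
    using assms(1) by (subst sum.union_disjoint[symmetric]) (auto intro: sum.cong)
  have "(\<Sum>i\<in>{i\<in>I. \<alpha> i = 0}. (\<alpha> i + \<beta> i * e) * log 2 (\<alpha> i + \<beta> i * e))
      = (\<Sum>i\<in>{i\<in>I. \<alpha> i = 0}. \<beta> i * e * log 2 (\<beta> i) + \<beta> i * (e * log 2 e))"
    using assms by (intro sum.cong) (auto simp: log_mult algebra_simps)
  also have "\<dots> = (\<Sum>i\<in>{i\<in>I. \<alpha> i = 0}. \<beta> i * e * log 2 (\<beta> i)) + sum \<beta> {i\<in>I. \<alpha> i = 0} * (e * log 2 e)"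
    by (simp add: sum.distrib sum_distrib_right)
  finally show ?thesis
    using split[of "\<lambda>i. (\<alpha> i + \<beta> i * e) * log 2 (\<alpha> i + \<beta> i * e)"] by linarith
qed

lemma eventually_affine_weights_pos:
  fixes \<alpha> \<beta> :: "'a \<Rightarrow> real"
  assumes "finite I" "\<forall>i\<in>I. 0 \<le> \<alpha> i" "\<forall>i\<in>I. \<alpha> i = 0 \<longrightarrow> 0 < \<beta> i"
  shows "\<forall>\<^sub>F e in at_right 0. \<forall>i\<in>I. 0 < \<alpha> i + \<beta> i * e"
proof -
  have "\<forall>\<^sub>F e in at_right 0. 0 < \<alpha> i + \<beta> i * e" if "i \<in> I" for i
  proof (cases "\<alpha> i = 0")
    case True
    with that assms(3) eventually_at_right_less[of 0] show ?thesis
      by (auto elim: eventually_mono)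
  next
    case False
    with that assms(2) have "0 < \<alpha> i"
      by (simp add: order.not_eq_order_implies_strict)
    moreover have "((\<lambda>e. \<alpha> i + \<beta> i * e) \<longlongrightarrow> \<alpha> i) (at_right 0)"
      by (rule tendsto_eq_intros refl)+ simp
    ultimately show ?thesis
      by (simp add: order_tendstoD)
  qed
  with assms(1) show ?thesis
    by (simp add: eventually_ball_finite)
qed

text \<open>
  The weights with \<open>\<alpha> i = 0\<close> contribute \<open>\<beta> i * e * log 2 e\<close> to \<open>\<Sum> w log w\<close>; everything
  else is differentiable at \<open>e = 0\<close> and hence changes by \<open>O(e) = o(- e * log 2 e)\<close>.
\<close>

lemma shannonH_affine_weights_expansion:
  fixes \<alpha> \<beta> :: "'a \<Rightarrow> real"
  assumes fin: "finite I" and nonneg: "\<forall>i\<in>I. 0 \<le> \<alpha> i" and zero: "\<forall>i\<in>I. \<alpha> i = 0 \<longrightarrow> 0 < \<beta> i"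
    and pos: "0 < sum \<alpha> I"
  shows "((\<lambda>e. (shannonH I (\<lambda>i. (\<alpha> i + \<beta> i * e) / (\<Sum>j\<in>I. \<alpha> j + \<beta> j * e))
                 - shannonH_plus I (\<lambda>i. \<alpha> i / sum \<alpha> I)) / - (e * log 2 e))
          \<longlongrightarrow> sum \<beta> {i\<in>I. \<alpha> i = 0} / sum \<alpha> I) (at_right 0)"
proof -
  define w where "w i e = \<alpha> i + \<beta> i * e" for i e
  define T where "T e = (\<Sum>j\<in>I. w j e)" for e
  define k where "k = sum \<beta> {i\<in>I. \<alpha> i = 0}"
  define C where "C e = log 2 (T e) - ((\<Sum>i\<in>{i\<in>I. \<alpha> i \<noteq> 0}. w i e * log 2 (w i e))
      + (\<Sum>i\<in>{i\<in>I. \<alpha> i = 0}. \<beta> i * e * log 2 (\<beta> i))) / T e" for e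
  have T_tendsto: "(T \<longlongrightarrow> sum \<alpha> I) (at_right 0)"
    unfolding T_def w_def by (rule tendsto_eq_intros refl)+ simp
  then have "\<forall>\<^sub>F e in at_right 0. 0 < T e"
    using pos by (rule order_tendstoD)
  moreover have "\<forall>\<^sub>F e in at_right 0. 0 < e \<and> e < (1::real)"
    by (rule eventually_at_rightI[of _ 1]) auto
  moreover note eventually_affine_weights_pos[OF fin nonneg zero]
  ultimately have decomposition: "\<forall>\<^sub>F e in at_right 0. (C e - C 0) / - (e * log 2 e) + k / T e
      = (shannonH I (\<lambda>i. w i e / T e) - C 0) / - (e * log 2 e)"
  proof eventually_elim
    case (elim e)
    then have "0 < e" "log 2 e < 0"
      by simp_all
    then have "e * log 2 e \<noteq> 0"
      by (metis mult_pos_neg less_irrefl)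
    moreover have H: "shannonH I (\<lambda>i. w i e / T e) = C e + k * - (e * log 2 e) / T e"
      using shannonH_normalize[OF fin, of "\<lambda>i. w i e"] sum_affine_weights_mult_log[OF fin zero] elim
      by (simp add: T_def C_def w_def k_def diff_divide_distrib add_divide_distrib)
    ultimately show ?case
      unfolding H using \<open>0 < T e\<close> by (simp add: field_simps)
  qed
  have "\<forall>i\<in>{i\<in>I. \<alpha> i \<noteq> 0}. 0 < \<alpha> i"
    using nonneg by (auto simp: order.not_eq_order_implies_strict)
  then have "\<exists>D. (C has_real_derivative D) (at 0)"
    unfolding C_def T_def w_def using pos by (auto intro!: exI derivative_eq_intros)
  then obtain D where "(C has_real_derivative D) (at 0)" ..
  then have "((\<lambda>e. (C e - C 0) / - (e * log 2 e) + k / T e) \<longlongrightarrow> 0 + k / sum \<alpha> I) (at_right 0)"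
    using pos by (intro tendsto_intros DERIV_diff_div_neg_mult_log T_tendsto) simp_all
  then have "((\<lambda>e. (shannonH I (\<lambda>i. w i e / T e) - C 0) / - (e * log 2 e)) \<longlongrightarrow> k / sum \<alpha> I)
      (at_right 0)"
    using decomposition by (simp add: Lim_transform_eventually)
  moreover have "C 0 = shannonH_plus I (\<lambda>i. \<alpha> i / sum \<alpha> I)"
    using shannonH_plus_normalize[OF fin nonneg] by (simp add: C_def T_def w_def)
  ultimately show ?thesis
    by (simp add: k_def w_def T_def)
qed

lemma tendsto_information_ratio:
  fixes hx hy hxy Q :: "'a \<Rightarrow> real"
  assumes Q: "(Q \<longlongrightarrow> 0) F" "\<forall>\<^sub>F e in F. 0 < Q e"
    and hx: "((\<lambda>e. hx e / Q e) \<longlongrightarrow> a) F"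
    and hy: "((\<lambda>e. (hy e - h) / Q e) \<longlongrightarrow> b) F"
    and hxy: "((\<lambda>e. (hxy e - h) / Q e) \<longlongrightarrow> c) F"
    and a: "0 < a" and h: "0 < h \<or> (h = 0 \<and> a \<le> b)"
  shows "((\<lambda>e. (hx e + hy e - hxy e) / min (hx e) (hy e)) \<longlongrightarrow> (a + b - c) / a) F"
proof -
  have "((\<lambda>e. hx e / Q e + (hy e - h) / Q e - (hxy e - h) / Q e) \<longlongrightarrow> a + b - c) F"
    by (intro tendsto_intros hx hy hxy)
  then have num: "((\<lambda>e. (hx e + hy e - hxy e) / Q e) \<longlongrightarrow> a + b - c) F"
    by (simp add: diff_divide_distrib add_divide_distrib add_diff_eq)
  have "((\<lambda>e. min (hx e / Q e) (hy e / Q e)) \<longlongrightarrow> a) F"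
  proof (cases "0 < h")
    case True
    have "LIM e F. h / Q e :> at_top"
      using True Q by (intro LIM_at_top_divide[where a = h]) auto
    then have "LIM e F. (hy e - h) / Q e + h / Q e :> at_top"
      by (rule filterlim_tendsto_add_at_top[OF hy])
    then have "\<forall>\<^sub>F e in F. a + 1 < hy e / Q e"
      by (simp add: filterlim_at_top_dense diff_divide_distrib)
    moreover have "\<forall>\<^sub>F e in F. hx e / Q e < a + 1"
      using hx by (rule order_tendstoD) simp
    ultimately have "\<forall>\<^sub>F e in F. hx e / Q e = min (hx e / Q e) (hy e / Q e)"
      by eventually_elim simp
    with hx show ?thesis
      by (rule Lim_transform_eventually)
  next
    case False
    with h have "((\<lambda>e. min (hx e / Q e) (hy e / Q e)) \<longlongrightarrow> min a b) F"
      using hy by (intro tendsto_min hx) simp_all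
    with False h show ?thesis
      by (simp add: min_absorb1)
  qed
  moreover have "\<forall>\<^sub>F e in F. min (hx e / Q e) (hy e / Q e) = min (hx e) (hy e) / Q e"
    using Q(2) by eventually_elim (simp add: min_divide_distrib_right)
  ultimately have den: "((\<lambda>e. min (hx e) (hy e) / Q e) \<longlongrightarrow> a) F"
    by (rule Lim_transform_eventually)
  have "((\<lambda>e. ((hx e + hy e - hxy e) / Q e) / (min (hx e) (hy e) / Q e)) \<longlongrightarrow> (a + b - c) / a) F"
    using a by (intro tendsto_divide num den) simp
  moreover have "\<forall>\<^sub>F e in F. ((hx e + hy e - hxy e) / Q e) / (min (hx e) (hy e) / Q e)
      = (hx e + hy e - hxy e) / min (hx e) (hy e)"
    using Q(2) by eventually_elim simp
  ultimately show ?thesis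
    by (rule Lim_transform_eventually)
qed

section \<open>Agreement matrices\<close>

lemma Ssum_pos:
  assumes "agreement_matrix n B"
  shows "0 < Ssum n B"
proof -
  obtain y0 x0 where "y0 < n" "x0 < n" "B y0 x0 \<noteq> 0"
    using assms by (auto simp: agreement_matrix_def)
  moreover have nonneg: "\<forall>y<n. \<forall>x<n. 0 \<le> B y x"
    using assms by (simp add: agreement_matrix_def)
  ultimately have "0 < (\<Sum>x<n. B y0 x)"
    by (intro sum_pos2[of _ x0]) (auto simp: order.not_eq_order_implies_strict)
  then show ?thesis
    unfolding Ssum_def using \<open>y0 < n\<close> nonneg
    by (intro sum_pos2[where i = y0 and f = "\<lambda>y. \<Sum>x<n. B y x"]) (auto intro: sum_nonneg)
qed

lemma agreement_matrix_transpose: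
  "agreement_matrix n (\<lambda>y x. B x y) \<longleftrightarrow> agreement_matrix n B"
  unfolding agreement_matrix_def by blast

lemma Ssum_transpose: "Ssum n (\<lambda>y x. B x y) = Ssum n B"
  unfolding Ssum_def by (rule sum.swap)

lemma pY_eq_pX_transpose: "pY n B = pX n (\<lambda>y x. B x y)"
  by (simp add: fun_eq_iff pY_def pX_def Ssum_transpose[of n B])

lemma pX_nonneg:
  assumes "agreement_matrix n B" "x < n"
  shows "0 \<le> pX n B x"
  using assms Ssum_pos[OF assms(1)] unfolding pX_def agreement_matrix_def
  by (auto intro!: divide_nonneg_pos sum_nonneg)

lemma sum_pX_eq_1:
  assumes "agreement_matrix n B"
  shows "(\<Sum>x<n. pX n B x) = 1"
  using Ssum_pos[OF assms] unfolding pX_def sum_divide_distrib[symmetric] Ssum_def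
  by (subst sum.swap) simp

lemma pY_nonneg: "agreement_matrix n B \<Longrightarrow> y < n \<Longrightarrow> 0 \<le> pY n B y"
  by (simp add: pY_eq_pX_transpose pX_nonneg agreement_matrix_transpose[of n B])

lemma sum_pY_eq_1: "agreement_matrix n B \<Longrightarrow> (\<Sum>y<n. pY n B y) = 1"
  by (simp add: pY_eq_pX_transpose sum_pX_eq_1 agreement_matrix_transpose[of n B])

lemma card_non_null_rows_le: "card (non_null_rows n B) \<le> n"
  using card_mono[of "{..<n}" "non_null_rows n B"] by (auto simp: non_null_rows_def)

lemma positive_pY_eq_non_null_rows:
  assumes "agreement_matrix n B"
  shows "{y\<in>{..<n}. 0 < pY n B y} = non_null_rows n B"
proof -
  have nonneg: "\<forall>y<n. \<forall>x<n. 0 \<le> B y x"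
    using assms by (simp add: agreement_matrix_def)
  have "0 < (\<Sum>x<n. B y x) \<longleftrightarrow> (\<exists>x<n. B y x \<noteq> 0)" if "y < n" for y
    using nonneg that sum_nonneg_eq_0_iff[of "{..<n}" "B y"]
    by (metis finite_lessThan lessThan_iff order_less_le sum_nonneg)
  then show ?thesis
    using Ssum_pos[OF assms] by (auto simp: pY_def non_null_rows_def zero_less_divide_iff)
qed

lemma single_nonnull_column_if_shannonH_plus_pX_eq_0:
  assumes B: "agreement_matrix n B" and H0: "shannonH_plus {..<n} (pX n B) = 0"
  obtains x0 where "x0 < n" "\<forall>y<n. \<forall>x<n. x \<noteq> x0 \<longrightarrow> B y x = 0"
proof -
  have "card {x\<in>{..<n}. 0 < pX n B x} = 1"
    using pX_nonneg[OF B] sum_pX_eq_1[OF B] H0 by (intro shannonH_plus_eq_0_imp_card_support) auto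
  then obtain x0 where x0: "{x\<in>{..<n}. 0 < pX n B x} = {x0}"
    by (auto simp: card_1_singleton_iff)
  have "B y x = 0" if "y < n" "x < n" "x \<noteq> x0" for x y
  proof -
    have "pX n B x = 0"
      using x0 pX_nonneg[OF B \<open>x < n\<close>] that by (auto simp: order.order_iff_strict)
    then have "(\<Sum>y<n. B y x) = 0"
      using Ssum_pos[OF B] by (simp add: pX_def)
    then show ?thesis
      using B that sum_nonneg_eq_0_iff[of "{..<n}" "\<lambda>y. B y x"] by (auto simp: agreement_matrix_def)
  qed
  moreover have "x0 < n"
    using x0 by auto
  ultimately show ?thesis
    using that by blast
qed

lemma card_non_null_rows_eq_1_if_shannonH_plus_pY_eq_0:
  assumes B: "agreement_matrix n B" and H0: "shannonH_plus {..<n} (pY n B) = 0"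
  shows "card (non_null_rows n B) = 1"
proof -
  have "card {y\<in>{..<n}. 0 < pY n B y} = 1"
    using pY_nonneg[OF B] sum_pY_eq_1[OF B] H0 by (intro shannonH_plus_eq_0_imp_card_support) auto
  then show ?thesis
    by (simp only: positive_pY_eq_non_null_rows[OF B])
qed

lemma sum_replace_zeros:
  fixes b :: "'a \<Rightarrow> real"
  assumes "finite J"
  shows "(\<Sum>j\<in>J. if b j = 0 then e else b j) = sum b J + real (card {j\<in>J. b j = 0}) * e"
proof -
  have "(\<Sum>j\<in>J. if b j = 0 then e else b j) = (\<Sum>j\<in>J. b j + (if b j = 0 then e else 0))"
    by (intro sum.cong) auto
  then show ?thesis
    using assms by (simp add: sum.distrib sum.If_cases Int_def)
qed

lemma shannonH_pX_zero_freed_expansion: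
  assumes B: "agreement_matrix n B"
  shows "((\<lambda>e. (shannonH {..<n} (pX n (zero_freed B e)) - shannonH_plus {..<n} (pX n B))
                / - (e * log 2 e))
          \<longlongrightarrow> real n * real (card {x. x < n \<and> (\<forall>y<n. B y x = 0)}) / Ssum n B) (at_right 0)"
proof -
  define \<alpha> where "\<alpha> x = (\<Sum>y<n. B y x)" for x
  define \<beta> where "\<beta> x = real (card {y\<in>{..<n}. B y x = 0})" for x
  define N where "N = {x. x < n \<and> (\<forall>y<n. B y x = 0)}"
  have nonneg: "\<forall>y<n. \<forall>x<n. 0 \<le> B y x"
    using B by (simp add: agreement_matrix_def)
  have Ssum: "Ssum n B = sum \<alpha> {..<n}"
    unfolding Ssum_def \<alpha>_def by (rule sum.swap)
  have pos: "0 < sum \<alpha> {..<n}"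
    using Ssum_pos[OF B] Ssum by simp
  have "\<alpha> x = 0 \<longleftrightarrow> (\<forall>y<n. B y x = 0)" if "x < n" for x
    unfolding \<alpha>_def using nonneg that by (subst sum_nonneg_eq_0_iff) auto
  then have N_eq: "{x\<in>{..<n}. \<alpha> x = 0} = N"
    by (auto simp: N_def)
  have \<beta>_N: "\<beta> x = real n" if "x \<in> N" for x
  proof -
    have "{y\<in>{..<n}. B y x = 0} = {..<n}"
      using that by (auto simp: N_def)
    then show ?thesis by (simp add: \<beta>_def)
  qed
  have "0 < n"
    using pos by (cases n) auto
  have pX_zero_freed: "pX n (zero_freed B e) = (\<lambda>x. (\<alpha> x + \<beta> x * e) / (\<Sum>j<n. \<alpha> j + \<beta> j * e))" for e
  proof -
    have col: "(\<Sum>y<n. zero_freed B e y x) = \<alpha> x + \<beta> x * e" for x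
      unfolding zero_freed_def \<alpha>_def \<beta>_def by (rule sum_replace_zeros) simp
    show ?thesis
      unfolding pX_def Ssum_def by (subst sum.swap) (simp add: col)
  qed
  have pX_B: "pX n B = (\<lambda>x. \<alpha> x / sum \<alpha> {..<n})"
    by (simp add: fun_eq_iff pX_def Ssum \<alpha>_def)
  have "sum \<beta> {x\<in>{..<n}. \<alpha> x = 0} = real n * real (card N)"
    unfolding N_eq by (simp add: \<beta>_N)
  moreover have "((\<lambda>e. (shannonH {..<n} (pX n (zero_freed B e)) - shannonH_plus {..<n} (pX n B))
                / - (e * log 2 e)) \<longlongrightarrow> sum \<beta> {x\<in>{..<n}. \<alpha> x = 0} / sum \<alpha> {..<n}) (at_right 0)"
    unfolding pX_zero_freed pX_B
  proof (rule shannonH_affine_weights_expansion)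
    show "\<forall>x\<in>{..<n}. 0 \<le> \<alpha> x"
      using nonneg by (auto simp: \<alpha>_def intro: sum_nonneg)
    show "\<forall>x\<in>{..<n}. \<alpha> x = 0 \<longrightarrow> 0 < \<beta> x"
      using N_eq \<beta>_N \<open>0 < n\<close> by auto
  qed (use pos in auto)
  ultimately show ?thesis
    by (simp add: Ssum N_def)
qed

lemma shannonH_pY_zero_freed_expansion:
  assumes B: "agreement_matrix n B"
  shows "((\<lambda>e. (shannonH {..<n} (pY n (zero_freed B e)) - shannonH_plus {..<n} (pY n B))
                / - (e * log 2 e))
          \<longlongrightarrow> real n * real (n - card (non_null_rows n B)) / Ssum n B) (at_right 0)"
proof -
  have "{y. y < n \<and> (\<forall>x<n. B y x = 0)} = {..<n} - non_null_rows n B"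
    by (auto simp: non_null_rows_def)
  then have "card {y. y < n \<and> (\<forall>x<n. B y x = 0)} = n - card (non_null_rows n B)"
    by (simp add: card_Diff_subset non_null_rows_def subset_eq)
  moreover have "zero_freed (\<lambda>y x. B x y) e = (\<lambda>y x. zero_freed B e x y)" for e
    by (simp add: zero_freed_def)
  ultimately show ?thesis
    using shannonH_pX_zero_freed_expansion[of n "\<lambda>y x. B x y"] B
    by (simp add: pY_eq_pX_transpose agreement_matrix_transpose[of n B] Ssum_transpose[of n B])
qed

lemma shannonH_pXY_zero_freed_expansion:
  assumes B: "agreement_matrix n B"
  shows "((\<lambda>e. (shannonH ({..<n} \<times> {..<n}) (pXY n (zero_freed B e))
                   - shannonH_plus ({..<n} \<times> {..<n}) (pXY n B)) / - (e * log 2 e))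
          \<longlongrightarrow> real (card {p\<in>{..<n} \<times> {..<n}. B (fst p) (snd p) = 0}) / Ssum n B) (at_right 0)"
proof -
  define I where "I = {..<n} \<times> {..<n}"
  define \<alpha> where "\<alpha> p = B (fst p) (snd p)" for p
  define \<beta> where "\<beta> p = (if \<alpha> p = 0 then 1 else 0 :: real)" for p
  have Ssum_eq: "Ssum n M = (\<Sum>p\<in>I. M (fst p) (snd p))" for M
    unfolding Ssum_def I_def sum.cartesian_product by (simp add: case_prod_beta)
  have "pXY n (zero_freed B e) = (\<lambda>p. (\<alpha> p + \<beta> p * e) / (\<Sum>q\<in>I. \<alpha> q + \<beta> q * e))" for e
  proof -
    have "zero_freed B e (fst p) (snd p) = \<alpha> p + \<beta> p * e" for p
      by (simp add: zero_freed_def \<alpha>_def \<beta>_def)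
    then show ?thesis
      by (simp add: fun_eq_iff pXY_def Ssum_eq)
  qed
  moreover have "pXY n B = (\<lambda>p. \<alpha> p / sum \<alpha> I)"
    by (simp add: fun_eq_iff pXY_def Ssum_eq \<alpha>_def)
  moreover have "sum \<beta> {p\<in>I. \<alpha> p = 0} = real (card {p\<in>I. \<alpha> p = 0})"
    by (simp add: \<beta>_def)
  moreover have "((\<lambda>e. (shannonH I (\<lambda>p. (\<alpha> p + \<beta> p * e) / (\<Sum>q\<in>I. \<alpha> q + \<beta> q * e))
                   - shannonH_plus I (\<lambda>p. \<alpha> p / sum \<alpha> I)) / - (e * log 2 e))
          \<longlongrightarrow> sum \<beta> {p\<in>I. \<alpha> p = 0} / sum \<alpha> I) (at_right 0)"
    using B Ssum_pos[OF B]
    by (intro shannonH_affine_weights_expansion)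
      (auto simp: I_def \<alpha>_def \<beta>_def agreement_matrix_def Ssum_eq)
  ultimately show ?thesis
    by (simp add: I_def \<alpha>_def Ssum_eq[of B])
qed

locale single_column_matrix =
  fixes n :: nat and B :: "nat \<Rightarrow> nat \<Rightarrow> real" and x0 :: nat
  assumes agreement: "agreement_matrix n B" and x0: "x0 < n"
    and zero_off_column: "\<forall>y<n. \<forall>x<n. x \<noteq> x0 \<longrightarrow> B y x = 0"
begin

lemma row_sum_eq: "y < n \<Longrightarrow> (\<Sum>x<n. B y x) = B y x0"
  using x0 zero_off_column by (subst sum.remove[of _ x0]) auto

lemma non_null_rows_eq: "non_null_rows n B = {y. y < n \<and> B y x0 \<noteq> 0}"
  using x0 zero_off_column by (auto simp: non_null_rows_def)

lemma card_null_columns: "card {x. x < n \<and> (\<forall>y<n. B y x = 0)} = n - 1"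
proof -
  have "\<exists>y<n. B y x0 \<noteq> 0"
    using agreement zero_off_column by (auto simp: agreement_matrix_def)
  then have "{x. x < n \<and> (\<forall>y<n. B y x = 0)} = {..<n} - {x0}"
    using zero_off_column by auto
  then show ?thesis
    using x0 by simp
qed

lemma card_zero_entries:
  "card {p\<in>{..<n} \<times> {..<n}. B (fst p) (snd p) = 0} = n * n - card (non_null_rows n B)"
proof -
  have "B y x = 0 \<longleftrightarrow> (y, x) \<notin> non_null_rows n B \<times> {x0}" if "y < n" "x < n" for y x
    using that zero_off_column by (cases "x = x0") (auto simp: non_null_rows_eq)
  then have "{p\<in>{..<n} \<times> {..<n}. B (fst p) (snd p) = 0} = {..<n} \<times> {..<n} - non_null_rows n B \<times> {x0}"
    by auto
  moreover have "non_null_rows n B \<times> {x0} \<subseteq> {..<n} \<times> {..<n}"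
    using x0 by (auto simp: non_null_rows_eq)
  ultimately show ?thesis
    by (simp add: card_Diff_subset finite_subset card_cartesian_product)
qed

lemma shannonH_plus_pXY_eq_pY:
  "shannonH_plus ({..<n} \<times> {..<n}) (pXY n B) = shannonH_plus {..<n} (pY n B)"
proof -
  have pXY_eq: "pXY n B (y, x) = (if x = x0 then pY n B y else 0)" if "y < n" "x < n" for y x
    using that zero_off_column by (simp add: pXY_def pY_def row_sum_eq)
  then have "{p\<in>{..<n} \<times> {..<n}. 0 < pXY n B p} = (\<lambda>y. (y, x0)) ` {y\<in>{..<n}. 0 < pY n B y}"
    using x0 by (auto simp: image_iff split: if_splits)
  then show ?thesis
    unfolding shannonH_plus_def using x0 by (auto simp: sum.reindex inj_on_def pXY_eq intro!: sum.cong)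
qed

lemma tendsto_shannonH_pX_zero_freed:
  assumes "shannonH_plus {..<n} (pX n B) = 0"
  shows "((\<lambda>e. shannonH {..<n} (pX n (zero_freed B e)) / - (e * log 2 e))
           \<longlongrightarrow> real n * real (n - 1) / Ssum n B) (at_right 0)"
  using shannonH_pX_zero_freed_expansion[OF agreement] by (simp add: assms card_null_columns)

lemma tendsto_shannonH_pXY_zero_freed:
  "((\<lambda>e. (shannonH ({..<n} \<times> {..<n}) (pXY n (zero_freed B e)) - shannonH_plus {..<n} (pY n B))
          / - (e * log 2 e))
      \<longlongrightarrow> real (n * n - card (non_null_rows n B)) / Ssum n B) (at_right 0)"
  using shannonH_pXY_zero_freed_expansion[OF agreement]
  by (simp add: card_zero_entries shannonH_plus_pXY_eq_pY)

end

theorem theorem2: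
  fixes n m :: nat and B :: "nat \<Rightarrow> nat \<Rightarrow> real"
  assumes "n \<ge> 2"
    and "agreement_matrix n B"
    and "shannonH_plus {..<n} (pX n B) = 0"
    and "card (non_null_rows n B) = m"
  shows "((\<lambda>\<epsilon>. IA n (zero_freed B \<epsilon>)) \<longlongrightarrow> (real n - real m) / real n) (at_right 0)"
proof -
  obtain x0 where "x0 < n" "\<forall>y<n. \<forall>x<n. x \<noteq> x0 \<longrightarrow> B y x = 0"
    using single_nonnull_column_if_shannonH_plus_pX_eq_0[OF assms(2,3)] by blast
  then interpret single_column_matrix n B x0
    using assms(2) by unfold_locales
  define S where "S = Ssum n B"
  have "0 < S" "m \<le> n"
    using Ssum_pos[OF assms(2)] card_non_null_rows_le[of n B] by (simp_all add: S_def assms(4))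
  have "0 < shannonH_plus {..<n} (pY n B) \<or> (shannonH_plus {..<n} (pY n B) = 0 \<and> m = 1)"
    using shannonH_plus_nonneg[of "{..<n}" "pY n B"] pY_nonneg[OF assms(2)] sum_pY_eq_1[OF assms(2)]
      card_non_null_rows_eq_1_if_shannonH_plus_pY_eq_0[OF assms(2)] assms(4)
    by fastforce
  then have "((\<lambda>e. IA n (zero_freed B e)) \<longlongrightarrow>
      (real n * real (n - 1) / S + real n * real (n - m) / S - real (n * n - m) / S)
      / (real n * real (n - 1) / S)) (at_right 0)"
    using \<open>0 < S\<close> assms(1)
    unfolding IA_def S_def
    by (intro tendsto_information_ratio[OF neg_mult_log_tendsto_0 neg_mult_log_pos_at_right_0
          tendsto_shannonH_pX_zero_freed[OF assms(3)]
          shannonH_pY_zero_freed_expansion[OF assms(2), unfolded assms(4)]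
          tendsto_shannonH_pXY_zero_freed[unfolded assms(4)]])
      auto
  moreover have "(real n * real (n - 1) / S + real n * real (n - m) / S - real (n * n - m) / S)
      / (real n * real (n - 1) / S) = (real n - real m) / real n"
    using \<open>0 < S\<close> assms(1) \<open>m \<le> n\<close> by (simp add: of_nat_diff le_trans[OF \<open>m \<le> n\<close>] field_simps)
  ultimately show ?thesis
    by simp
qed

end
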